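(* Let $\mathfrak{m}_{\mathbb{B}}=\left\{\begin{pmatrix}0&\overline{q}\\ q&0\end{pmatrix}:q\in\mathbb{H}\right\}$. The map $\pi:\mathrm{Sp}(1)\times\mathfrak{m}_{\mathbb{B}}\times\mathrm{Sp}(1)\to\mathrm{Sp}(1,1)$ given by \[ \pi(u,X,v)=\operatorname{diag}(u,1)\,\exp(X)\,v \] is a diffeomorphism.
   Context: $\mathbb{H}$ denotes the quaternions and $\mathrm{Sp}(1)=\{u\in\mathbb{H}:|u|=1\}$. Let $I_{1,1}=\operatorname{diag}(1,-1)$ and $\mathrm{Sp}(1,1)=\{A\in M_2(\mathbb{H}):A^*I_{1,1}A=I_{1,1}\}$, where $A^*$ is the conjugate transpose. Here $\exp$ is the matrix exponential $\exp(X)=\sum_{k\ge0}X^k/k!$ (which is the Lie group exponential of $\mathrm{Sp}(1,1)$), and in $\pi(u,X,v)$ the element $v\in\mathrm{Sp}(1)$ multiplies the matrix on the right as the scalar matrix $vI_2$. *)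

theory Defs
  imports "HOL-Analysis.Analysis"
begin

text \<open>A quaternion a + b i + c j + d k is represented by (a,b,c,d); the product type
  carries the Euclidean structure of R^4, so norm is the quaternion modulus.\<close>

type_synonym quat = "real \<times> real \<times> real \<times> real"

definition qone :: quat where "qone = (1, 0, 0, 0)"

fun qmul :: "quat \<Rightarrow> quat \<Rightarrow> quat" where
  "qmul (a1, b1, c1, d1) (a2, b2, c2, d2) =
     (a1*a2 - b1*b2 - c1*c2 - d1*d2,
      a1*b2 + b1*a2 + c1*d2 - d1*c2,
      a1*c2 - b1*d2 + c1*a2 + d1*b2,
      a1*d2 + b1*c2 - c1*b2 + d1*a2)"

fun qcnj :: "quat \<Rightarrow> quat" where
  "qcnj (a, b, c, d) = (a, -b, -c, -d)"

definition Sp1 :: "quat set" where "Sp1 = {u. norm u = 1}"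

text \<open>(a, b, c, d) represents the matrix [[a, b], [c, d]].\<close>

type_synonym hmat = "quat \<times> quat \<times> quat \<times> quat"

fun hmul :: "hmat \<Rightarrow> hmat \<Rightarrow> hmat" where
  "hmul (a, b, c, d) (e, f, g, h) =
     (qmul a e + qmul b g, qmul a f + qmul b h, qmul c e + qmul d g, qmul c f + qmul d h)"

fun hadj :: "hmat \<Rightarrow> hmat" where
  "hadj (a, b, c, d) = (qcnj a, qcnj c, qcnj b, qcnj d)"

definition hid :: hmat where "hid = (qone, 0, 0, qone)"

definition I11 :: hmat where "I11 = (qone, 0, 0, - qone)"

definition Sp11 :: "hmat set" where "Sp11 = {A. hmul (hadj A) (hmul I11 A) = I11}"

fun hpow :: "hmat \<Rightarrow> nat \<Rightarrow> hmat" where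
  "hpow X 0 = hid"
| "hpow X (Suc k) = hmul X (hpow X k)"

definition hexp :: "hmat \<Rightarrow> hmat" where
  "hexp X = (\<Sum>k. (1 / fact k) *\<^sub>R hpow X k)"

definition mB :: "hmat set" where "mB = {(0, qcnj q, q, 0) | q. True}"

definition hdiag :: "quat \<Rightarrow> quat \<Rightarrow> hmat" where "hdiag u w = (u, 0, 0, w)"

definition piB :: "quat \<times> hmat \<times> quat \<Rightarrow> hmat" where
  "piB = (\<lambda>(u, X, v). hmul (hmul (hdiag u qone) (hexp X)) (hdiag v v))"

fun Ck :: "nat \<Rightarrow> 'a set \<Rightarrow> ('a::real_normed_vector \<Rightarrow> 'b::real_normed_vector) \<Rightarrow> bool" where
  "Ck 0 U f = continuous_on U f"
| "Ck (Suc k) U f = ((\<forall>x\<in>U. f differentiable (at x)) \<and>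
                     (\<forall>v. Ck k U (\<lambda>x. frechet_derivative f (at x) v)))"

definition smooth_on :: "'a::real_normed_vector set \<Rightarrow> ('a \<Rightarrow> 'b::real_normed_vector) \<Rightarrow> bool" where
  "smooth_on U f \<longleftrightarrow> open U \<and> (\<forall>k. Ck k U f)"

definition smooth_map_on :: "'a::euclidean_space set \<Rightarrow> ('a \<Rightarrow> 'b::euclidean_space) \<Rightarrow> bool" where
  "smooth_map_on S f \<longleftrightarrow>
     (\<forall>x\<in>S. \<exists>U g. open U \<and> x \<in> U \<and> smooth_on U g \<and> (\<forall>y\<in>S \<inter> U. g y = f y))"

definition diffeomorphism_betw :: "('a::euclidean_space \<Rightarrow> 'b::euclidean_space) \<Rightarrow> 'a set \<Rightarrow> 'b set \<Rightarrow> bool" where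
  "diffeomorphism_betw f S T \<longleftrightarrow>
     bij_betw f S T \<and> smooth_map_on S f \<and> smooth_map_on T (inv_into S f)"

end

theory Submission
  imports Defs
begin

text \<open>Write mB_of q for the element of m_B with lower left entry q. Since (mB_of q)^2 = |q|^2 I,
  exp (mB_of q) = cosh |q| I + (sinh |q| / |q|) mB_of q, and
  pi (u, mB_of q, v) = (cosh |q| u v, (sinh |q| / |q|) u cnj q v, (sinh |q| / |q|) q v, cosh |q| v).
  Conversely every (a, b, c, d) in Sp(1,1) has |d|^2 = 1 + |c|^2 and b = a cnj c d / |d|^2, and
  the unique preimage is v = d / |d|, u = a cnj d / |d|^2, q = (r / sinh r) c cnj d / |d| with
  sinh r = |c|. Both maps are restrictions of explicit smooth maps on open sets. The one delicate
  point is that r / sinh r is a smooth function of sinh r ^ 2 near 0; this follows from the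
  inverse function theorem for y \<mapsto> y (sinh (sqrt y) / sqrt y)^2, an entire power series
  with derivative 1 at 0. Smoothness of such inverses, of 1/t and of sqrt t is proved by
  bootstrapping along autonomous differential equations y' = G y.\<close>

section \<open>Smooth maps on open subsets of Euclidean spaces\<close>

lemma Ck_cong:
  assumes "open U" "\<And>x. x \<in> U \<Longrightarrow> f x = g x" "Ck k U f"
  shows "Ck k U g"
  using assms(2,3)
proof (induction k arbitrary: f g)
  case 0
  then show ?case using continuous_on_cong by fastforce
next
  case (Suc k)
  have D: "(g has_derivative frechet_derivative f (at x)) (at x)" if "x \<in> U" for x
    using Suc.prems that assms(1)
    by (auto intro!: has_derivative_transform_within_open[of f _ x UNIV U g]
        simp: frechet_derivative_works[symmetric])
  then have "frechet_derivative g (at x) = frechet_derivative f (at x)" if "x \<in> U" for x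
    using that frechet_derivative_at by metis
  then have "Ck k U (\<lambda>x. frechet_derivative g (at x) v)" for v
    using Suc.prems Suc.IH[of "\<lambda>x. frechet_derivative f (at x) v"] by simp
  with D show ?case
    by (auto simp: differentiable_def)
qed

lemma Ck_subset: "Ck k U f \<Longrightarrow> V \<subseteq> U \<Longrightarrow> Ck k V f"
  by (induction k arbitrary: f) (auto intro: continuous_on_subset)

lemma Ck_Suc_imp_Ck: "Ck (Suc k) U f \<Longrightarrow> Ck k U f"
proof (induction k arbitrary: f)
  case 0
  then show ?case
    by (auto intro!: continuous_at_imp_continuous_on differentiable_imp_continuous_within)
qed auto

lemma Ck_SucI:
  assumes "open U" "\<And>x. x \<in> U \<Longrightarrow> (f has_derivative f' x) (at x)" "\<And>v. Ck k U (\<lambda>x. f' x v)"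
  shows "Ck (Suc k) U f"
proof -
  have "frechet_derivative f (at x) = f' x" if "x \<in> U" for x
    using assms(2) that frechet_derivative_at by metis
  then show ?thesis
    using assms Ck_cong[OF assms(1), of "\<lambda>x. f' x v" "\<lambda>x. frechet_derivative f (at x) v" for v]
    by (auto simp: differentiable_def)
qed

lemma Ck_Suc_has_derivative:
  "Ck (Suc k) U f \<Longrightarrow> x \<in> U \<Longrightarrow> (f has_derivative frechet_derivative f (at x)) (at x)"
  using frechet_derivative_works by auto

lemma Ck_const: "open U \<Longrightarrow> Ck k U (\<lambda>x. c)"
  by (induction k arbitrary: c) (auto intro!: Ck_SucI[where f'="\<lambda>x v. 0"])

lemma Ck_id: "open U \<Longrightarrow> Ck k U (\<lambda>x. x)"
  by (induction k) (auto intro!: Ck_SucI[where f'="\<lambda>x v. v"] Ck_const)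

lemma Ck_linear:
  assumes "open U" "bounded_linear L" "Ck k U f"
  shows "Ck k U (\<lambda>x. L (f x))"
  using assms(3)
proof (induction k arbitrary: f)
  case 0
  then show ?case
    using continuous_on_compose2[of UNIV L U f] linear_continuous_on[OF assms(2)] by auto
next
  case (Suc k)
  show ?case
  proof (rule Ck_SucI[OF assms(1), where f'="\<lambda>x v. L (frechet_derivative f (at x) v)"])
    show "((\<lambda>x. L (f x)) has_derivative (\<lambda>v. L (frechet_derivative f (at x) v))) (at x)"
      if "x \<in> U" for x
      using Ck_Suc_has_derivative[OF Suc.prems that] bounded_linear.has_derivative[OF assms(2)]
      by blast
  qed (use Suc in auto)
qed

lemma Ck_add:
  assumes "open U" "Ck k U f" "Ck k U g"
  shows "Ck k U (\<lambda>x. f x + g x)"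
  using assms(2,3)
proof (induction k arbitrary: f g)
  case 0
  then show ?case by (auto intro: continuous_on_add)
next
  case (Suc k)
  show ?case
  proof (rule Ck_SucI[OF assms(1),
        where f'="\<lambda>x v. frechet_derivative f (at x) v + frechet_derivative g (at x) v"])
    show "((\<lambda>x. f x + g x) has_derivative
        (\<lambda>v. frechet_derivative f (at x) v + frechet_derivative g (at x) v)) (at x)"
      if "x \<in> U" for x
      using Ck_Suc_has_derivative[OF Suc.prems(1) that] Ck_Suc_has_derivative[OF Suc.prems(2) that]
      by (rule has_derivative_add)
  qed (use Suc in auto)
qed

lemma Ck_sum:
  assumes "open U" "finite I" "\<And>i. i \<in> I \<Longrightarrow> Ck k U (f i)"
  shows "Ck k U (\<lambda>x. \<Sum>i\<in>I. f i x)"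
  using assms(2,3)
  by (induction I rule: finite_induct) (auto intro!: Ck_const Ck_add assms(1))

lemma Ck_bilinear:
  assumes "open U" "bounded_bilinear bl" "Ck k U f" "Ck k U g"
  shows "Ck k U (\<lambda>x. bl (f x) (g x))"
  using assms(3,4)
proof (induction k arbitrary: f g)
  case 0
  then show ?case using bounded_bilinear.continuous_on[OF assms(2), of U f g] by simp
next
  case (Suc k)
  let ?f' = "\<lambda>x. frechet_derivative f (at x)" and ?g' = "\<lambda>x. frechet_derivative g (at x)"
  show ?case
  proof (rule Ck_SucI[OF assms(1), where f'="\<lambda>x v. bl (f x) (?g' x v) + bl (?f' x v) (g x)"])
    show "((\<lambda>x. bl (f x) (g x)) has_derivative (\<lambda>v. bl (f x) (?g' x v) + bl (?f' x v) (g x)))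
        (at x)" if "x \<in> U" for x
      using Ck_Suc_has_derivative[OF Suc.prems(1) that] Ck_Suc_has_derivative[OF Suc.prems(2) that]
      by (rule bounded_bilinear.FDERIV[OF assms(2)])
    show "Ck k U (\<lambda>x. bl (f x) (?g' x v) + bl (?f' x v) (g x))" for v
      using Suc.prems by (intro Ck_add[OF assms(1)] Suc.IH) (auto intro: Ck_Suc_imp_Ck)
  qed
qed

lemma Ck_Pair:
  assumes "open U" "Ck k U f" "Ck k U g"
  shows "Ck k U (\<lambda>x. (f x, g x))"
  using assms(2,3)
proof (induction k arbitrary: f g)
  case 0
  then show ?case using continuous_on_Pair[of U f g] by simp
next
  case (Suc k)
  show ?case
  proof (rule Ck_SucI[OF assms(1),
        where f'="\<lambda>x v. (frechet_derivative f (at x) v, frechet_derivative g (at x) v)"])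
    show "((\<lambda>x. (f x, g x)) has_derivative
        (\<lambda>v. (frechet_derivative f (at x) v, frechet_derivative g (at x) v))) (at x)"
      if "x \<in> U" for x
      using Ck_Suc_has_derivative[OF Suc.prems(1) that] Ck_Suc_has_derivative[OF Suc.prems(2) that]
      by (rule has_derivative_Pair)
  qed (use Suc in auto)
qed

text \<open>In the chain rule the derivative of g \<circ> f is expanded in a basis, so that
  it becomes a finite sum of products of derivatives of lower order.\<close>
lemma Ck_compose:
  fixes f :: "'a::euclidean_space \<Rightarrow> 'b::euclidean_space" and g :: "'b \<Rightarrow> 'c::euclidean_space"
  assumes "open U" "f ` U \<subseteq> V" "Ck k U f" "smooth_on V g"
  shows "Ck k U (\<lambda>x. g (f x))"
  using assms(2-4)
proof (induction k arbitrary: g f)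
  case 0
  have "continuous_on V g"
    using 0(3) Ck.simps(1) unfolding smooth_on_def by blast
  with 0 show ?case
    using continuous_on_compose2[of V g U f] by auto
next
  case (Suc k)
  have g: "open V" "\<And>m. Ck m V g" using Suc.prems(3) by (auto simp: smooth_on_def)
  let ?f' = "\<lambda>x. frechet_derivative f (at x)" and ?g' = "\<lambda>y. frechet_derivative g (at y)"
  define D where "D x v = (\<Sum>i\<in>Basis. (?f' x v \<bullet> i) *\<^sub>R ?g' (f x) i)" for x v
  show ?case
  proof (rule Ck_SucI[OF assms(1), where f'=D])
    show "((\<lambda>x. g (f x)) has_derivative D x) (at x)" if "x \<in> U" for x
    proof -
      have fx: "f x \<in> V" using that Suc.prems(1) by blast
      have "linear (?g' (f x))"
        using Ck_Suc_has_derivative[OF g(2) fx] by (rule has_derivative_linear)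
      then have "?g' (f x) (?f' x v) = D x v" for v
        unfolding D_def by (subst euclidean_representation[symmetric]) (simp add: linear_sum linear_scale)
      then have "(\<lambda>v. ?g' (f x) (?f' x v)) = D x" by blast
      with diff_chain_at[OF Ck_Suc_has_derivative[OF Suc.prems(2) that] Ck_Suc_has_derivative[OF g(2) fx]]
      show ?thesis by (simp add: o_def)
    qed
    show "Ck k U (\<lambda>x. D x v)" for v
      unfolding D_def
    proof (intro Ck_sum[OF assms(1) finite_Basis] Ck_bilinear[OF assms(1) bounded_bilinear_scaleR])
      show "Ck k U (\<lambda>x. ?f' x v \<bullet> i)" for i
        using Suc.prems(2) by (intro Ck_linear[OF assms(1) bounded_linear_inner_left]) simp
      have "smooth_on V (\<lambda>y. ?g' y i)" for i
        using g(1) g(2)[of "Suc m" for m] by (simp add: smooth_on_def)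
      then show "Ck k U (\<lambda>x. ?g' (f x) i)" for i
        using Suc.IH Suc.prems(1) Ck_Suc_imp_Ck[OF Suc.prems(2)] by blast
    qed
  qed
qed

lemma smooth_on_open: "smooth_on U f \<Longrightarrow> open U"
  by (simp add: smooth_on_def)

lemma smooth_on_imp_continuous_on: "smooth_on U f \<Longrightarrow> continuous_on U f"
  using Ck.simps(1) unfolding smooth_on_def by blast

lemma smooth_on_cong:
  assumes "smooth_on U f" "\<And>x. x \<in> U \<Longrightarrow> f x = g x"
  shows "smooth_on U g"
  using assms Ck_cong[of U f g] by (auto simp: smooth_on_def)

lemma smooth_on_subset:
  assumes "smooth_on U f" "open V" "V \<subseteq> U"
  shows "smooth_on V f"
  using assms Ck_subset[of _ U f V] by (auto simp: smooth_on_def)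

lemma smooth_on_const: "open U \<Longrightarrow> smooth_on U (\<lambda>x. c)"
  by (simp add: smooth_on_def Ck_const)

lemma smooth_on_id: "open U \<Longrightarrow> smooth_on U (\<lambda>x. x)"
  by (simp add: smooth_on_def Ck_id)

lemma smooth_on_linear:
  assumes "bounded_linear L" "smooth_on U f"
  shows "smooth_on U (\<lambda>x. L (f x))"
  using assms Ck_linear[of U L] by (auto simp: smooth_on_def)

lemma smooth_on_add:
  assumes "smooth_on U f" "smooth_on U g"
  shows "smooth_on U (\<lambda>x. f x + g x)"
  using assms by (auto simp: smooth_on_def intro!: Ck_add)

lemma smooth_on_bilinear:
  assumes "bounded_bilinear bl" "smooth_on U f" "smooth_on U g"
  shows "smooth_on U (\<lambda>x. bl (f x) (g x))"
  using assms Ck_bilinear[of U bl] by (auto simp: smooth_on_def)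

lemma smooth_on_Pair:
  assumes "smooth_on U f" "smooth_on U g"
  shows "smooth_on U (\<lambda>x. (f x, g x))"
  using assms by (auto simp: smooth_on_def intro!: Ck_Pair)

lemma smooth_on_compose:
  fixes f :: "'a::euclidean_space \<Rightarrow> 'b::euclidean_space" and g :: "'b \<Rightarrow> 'c::euclidean_space"
  assumes "smooth_on U f" "smooth_on V g" "f ` U \<subseteq> V"
  shows "smooth_on U (\<lambda>x. g (f x))"
  using assms Ck_compose[of U f V _ g] by (auto simp: smooth_on_def)

lemma smooth_on_fst: "smooth_on U f \<Longrightarrow> smooth_on U (\<lambda>x. fst (f x))"
  by (rule smooth_on_linear[OF bounded_linear_fst])

lemma smooth_on_snd: "smooth_on U f \<Longrightarrow> smooth_on U (\<lambda>x. snd (f x))"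
  by (rule smooth_on_linear[OF bounded_linear_snd])

lemma smooth_on_minus: "smooth_on U f \<Longrightarrow> smooth_on U (\<lambda>x. - f x)"
  by (rule smooth_on_linear[OF bounded_linear_minus[OF bounded_linear_ident]])

lemma smooth_on_mult:
  "smooth_on U f \<Longrightarrow> smooth_on U g \<Longrightarrow> smooth_on U (\<lambda>x. f x * g x :: real)"
  by (rule smooth_on_bilinear[OF bounded_bilinear_mult])

lemma smooth_on_power:
  assumes "smooth_on U f"
  shows "smooth_on U (\<lambda>x. f x ^ n :: real)"
proof (induction n)
  case 0
  show ?case
    using smooth_on_const[OF smooth_on_open[OF assms]] by simp
next
  case (Suc n)
  show ?case
    using smooth_on_mult[OF assms Suc.IH] by simp
qed

lemma smooth_on_scaleR:
  "smooth_on U f \<Longrightarrow> smooth_on U g \<Longrightarrow> smooth_on U (\<lambda>x. f x *\<^sub>R g x)"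
  by (rule smooth_on_bilinear[OF bounded_bilinear_scaleR])

lemma smooth_on_inner:
  "smooth_on U f \<Longrightarrow> smooth_on U g \<Longrightarrow> smooth_on U (\<lambda>x. f x \<bullet> g x)"
  by (rule smooth_on_bilinear[OF bounded_bilinear_inner])

lemma smooth_on_power2_norm:
  fixes f :: "'a::real_normed_vector \<Rightarrow> 'b::real_inner"
  assumes "smooth_on U f"
  shows "smooth_on U (\<lambda>x. (norm (f x))\<^sup>2)"
  using smooth_on_inner[OF assms assms] by (rule smooth_on_cong) (simp add: power2_norm_eq_inner)

lemma smooth_on_deriv:
  fixes f :: "real \<Rightarrow> real"
  assumes "smooth_on U f" "\<And>x. x \<in> U \<Longrightarrow> (f has_real_derivative f' x) (at x)"
  shows "smooth_on U f'"
  unfolding smooth_on_def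
proof (intro conjI allI)
  show "open U" using assms(1) by (rule smooth_on_open)
  fix k
  have f': "frechet_derivative f (at x) 1 = f' x" if "x \<in> U" for x
    using frechet_derivative_at[OF assms(2)[OF that, unfolded has_field_derivative_def]]
    by (metis mult_1_right)
  have "Ck (Suc k) U f"
    using assms(1) by (simp add: smooth_on_def)
  then have "Ck k U (\<lambda>x. frechet_derivative f (at x) 1)"
    by simp
  then show "Ck k U f'"
    by (rule Ck_cong[OF \<open>open U\<close> f', rotated])
qed

text \<open>Bootstrapping: if f' = G \<circ> f with G smooth, then f being C^k makes f' C^k.\<close>
lemma smooth_on_ode:
  fixes f G :: "real \<Rightarrow> real"
  assumes "open U" "f ` U \<subseteq> V" "smooth_on V G"
    and "\<And>x. x \<in> U \<Longrightarrow> (f has_real_derivative G (f x)) (at x)"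
  shows "smooth_on U f"
  unfolding smooth_on_def
proof (intro conjI allI)
  fix k show "Ck k U f"
  proof (induction k)
    case 0
    have "isCont f x" if "x \<in> U" for x
      using assms(4)[OF that] by (rule DERIV_isCont)
    then show ?case
      by (simp add: continuous_at_imp_continuous_on)
  next
    case (Suc k)
    show ?case
    proof (rule Ck_SucI[OF assms(1), where f'="\<lambda>x h. G (f x) * h"])
      show "(f has_derivative (\<lambda>h. G (f x) * h)) (at x)" if "x \<in> U" for x
        using assms(4)[OF that] by (simp add: has_field_derivative_def)
      show "Ck k U (\<lambda>x. G (f x) * v)" for v
        using Ck_compose[OF assms(1,2) Suc assms(3)] by (rule Ck_linear[OF assms(1) bounded_linear_mult_left])
    qed
  qed
qed (fact assms)

lemma smooth_on_powser:
  fixes c :: "nat \<Rightarrow> real"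
  assumes "\<And>y. summable (\<lambda>n. c n * y ^ n)"
  shows "smooth_on UNIV (\<lambda>y. \<Sum>n. c n * y ^ n)"
  unfolding smooth_on_def
proof (intro conjI allI)
  fix k show "Ck k UNIV (\<lambda>y. \<Sum>n. c n * y ^ n)"
    using assms
  proof (induction k arbitrary: c)
    case 0
    then show ?case
      using termdiffs_strong_converges_everywhere[OF 0]
      by (auto intro!: continuous_at_imp_continuous_on DERIV_isCont)
  next
    case (Suc k)
    show ?case
    proof (rule Ck_SucI[where f'="\<lambda>x h. (\<Sum>n. diffs c n * x ^ n) * h"])
      show "((\<lambda>y. \<Sum>n. c n * y ^ n) has_derivative (\<lambda>h. (\<Sum>n. diffs c n * x ^ n) * h)) (at x)" for x
        using termdiffs_strong_converges_everywhere[OF Suc.prems]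
        by (simp add: has_field_derivative_def)
      show "Ck k UNIV (\<lambda>x. (\<Sum>n. diffs c n * x ^ n) * v)" for v
        using Suc.IH[of "diffs c"] termdiff_converges_all[OF Suc.prems]
        by (intro Ck_linear[OF open_UNIV bounded_linear_mult_left]) blast
    qed simp
  qed
qed simp

text \<open>The reciprocal solves the autonomous equation y' = - y * y.\<close>
lemma smooth_on_inverse: "smooth_on (- {0}) (inverse :: real \<Rightarrow> real)"
proof (rule smooth_on_ode[where V=UNIV and G="\<lambda>s. - (s * s)"])
  show "smooth_on UNIV (\<lambda>s::real. - (s * s))"
    using smooth_on_minus[OF smooth_on_mult[OF smooth_on_id smooth_on_id]] by simp
  show "(inverse has_real_derivative - (inverse x * inverse x)) (at x)" if "x \<in> - {0}" for x
    using DERIV_inverse[of x] that by (simp add: power2_eq_square)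
qed auto

lemma smooth_on_sqrt: "smooth_on {0<..} sqrt"
proof (rule smooth_on_ode[where V="{0<..}" and G="\<lambda>s. inverse s / 2"])
  have "smooth_on {0<..} (inverse :: real \<Rightarrow> real)"
    by (rule smooth_on_subset[OF smooth_on_inverse]) auto
  then show "smooth_on {0<..} (\<lambda>s::real. inverse s / 2)"
    by (rule smooth_on_linear[OF bounded_linear_divide])
  show "(sqrt has_real_derivative inverse (sqrt x) / 2) (at x)" if "x \<in> {0<..}" for x
    using that by (intro DERIV_real_sqrt) simp
qed (auto simp: image_subset_iff)

lemma smooth_on_norm: "smooth_on (- {0}) (norm :: 'a::euclidean_space \<Rightarrow> real)"
proof -
  have "open (- {0 :: 'a})"
    by (intro open_Compl closed_singleton)
  then have inner: "smooth_on (- {0}) (\<lambda>x::'a. x \<bullet> x)"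
    using smooth_on_inner[OF smooth_on_id smooth_on_id] by blast
  have "(\<lambda>x::'a. x \<bullet> x) ` (- {0}) \<subseteq> {0<..}"
    by (auto simp: image_subset_iff)
  from smooth_on_compose[OF inner smooth_on_sqrt this]
  show ?thesis
    by (rule smooth_on_cong) (rule norm_eq_sqrt_inner[symmetric])
qed

lemma smooth_on_inverse_norm:
  fixes f :: "'a::euclidean_space \<Rightarrow> 'b::euclidean_space"
  assumes "smooth_on U f" "\<And>x. x \<in> U \<Longrightarrow> f x \<noteq> 0"
  shows "smooth_on U (\<lambda>x. inverse (norm (f x)))"
proof -
  have "smooth_on U (\<lambda>x. norm (f x))"
    using assms by (intro smooth_on_compose[OF assms(1) smooth_on_norm]) auto
  then show ?thesis
    using assms(2) by (intro smooth_on_compose[OF _ smooth_on_inverse]) auto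
qed

lemma smooth_on_imp_smooth_map_on:
  assumes "smooth_on U g" "S \<subseteq> U" "\<And>x. x \<in> S \<Longrightarrow> g x = f x"
  shows "smooth_map_on S f"
  unfolding smooth_map_on_def using smooth_on_open[OF assms(1)] assms by blast

lemma smooth_map_on_cong:
  assumes "smooth_map_on S f" "\<And>x. x \<in> S \<Longrightarrow> f x = g x"
  shows "smooth_map_on S g"
  using assms unfolding smooth_map_on_def by (metis IntD1)

lemma diffeomorphism_betwI:
  assumes "f ` S \<subseteq> T" "g ` T \<subseteq> S" "\<And>x. x \<in> S \<Longrightarrow> g (f x) = x" "\<And>y. y \<in> T \<Longrightarrow> f (g y) = y"
    and "smooth_map_on S f" "smooth_map_on T g"
  shows "diffeomorphism_betw f S T"
proof -
  have bij: "bij_betw f S T"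
    using assms(1-4) by (intro bij_betw_byWitness[where f'=g]) auto
  have "g y = inv_into S f y" if "y \<in> T" for y
    using bij_betw_imp_inj_on[OF bij] assms(2,4) that by (intro inv_into_f_eq[symmetric]) auto
  with assms(6) have "smooth_map_on T (inv_into S f)"
    by (rule smooth_map_on_cong)
  with bij assms(5) show ?thesis
    by (simp add: diffeomorphism_betw_def)
qed

section \<open>Smooth inverses of real functions\<close>

lemma has_real_derivative_pos_imp_strict_mono_on:
  fixes f :: "real \<Rightarrow> real"
  assumes "\<And>y. a < y \<Longrightarrow> (f has_real_derivative f' y) (at y)" "\<And>y. a < y \<Longrightarrow> 0 < f' y"
  shows "strict_mono_on {a<..} f"
proof (rule strict_mono_onI)
  fix x y assume "x \<in> {a<..}" "y \<in> {a<..}" "x < y"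
  show "f x < f y"
  proof (rule DERIV_pos_imp_increasing[OF \<open>x < y\<close>])
    fix t assume "x \<le> t" "t \<le> y"
    with \<open>x \<in> {a<..}\<close> have "a < t"
      by simp
    then show "\<exists>D. (f has_real_derivative D) (at t) \<and> 0 < D"
      using assms(1)[OF \<open>a < t\<close>] assms(2)[OF \<open>a < t\<close>] by blast
  qed
qed

lemma isCont_inv_into_real:
  fixes f f' :: "real \<Rightarrow> real"
  assumes f': "\<And>y. a < y \<Longrightarrow> (f has_real_derivative f' y) (at y)" "\<And>y. a < y \<Longrightarrow> 0 < f' y"
    and "a < x"
  shows "isCont (inv_into {a<..} f) (f x)"
proof (rule isCont_inverse_function2[where f=f and x=x and a="(a + x) / 2" and b="x + 1"])
  have inj: "inj_on f {a<..}"
    using has_real_derivative_pos_imp_strict_mono_on[OF f'] by (rule strict_mono_on_imp_inj_on)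
  show "inv_into {a<..} f (f w) = w" if "(a + x) / 2 \<le> w" "w \<le> x + 1" for w
    using that \<open>a < x\<close> by (intro inv_into_f_f[OF inj]) simp
  show "isCont f w" if "(a + x) / 2 \<le> w" "w \<le> x + 1" for w
    using that \<open>a < x\<close> by (intro DERIV_isCont[OF f'(1)]) simp
qed (use \<open>a < x\<close> in auto)

lemma inv_into_has_real_derivative:
  fixes f f' :: "real \<Rightarrow> real"
  assumes f': "\<And>y. a < y \<Longrightarrow> (f has_real_derivative f' y) (at y)" "\<And>y. a < y \<Longrightarrow> 0 < f' y"
    and W: "open W" "W \<subseteq> f ` {a<..}" and "z \<in> W"
  shows "(inv_into {a<..} f has_real_derivative inverse (f' (inv_into {a<..} f z))) (at z)"
proof -
  let ?g = "inv_into {a<..} f"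
  have f_g: "f (?g y) = y" if "y \<in> W" for y
    using W(2) that by (intro f_inv_into_f) blast
  have "?g z \<in> {a<..}"
    using W(2) \<open>z \<in> W\<close> by (intro inv_into_into) blast
  then have "a < ?g z"
    by simp
  obtain e where "0 < e" "ball z e \<subseteq> W"
    using W(1) \<open>z \<in> W\<close> by (metis open_contains_ball)
  show ?thesis
  proof (rule DERIV_inverse_function[where f=f and g="?g" and x=z and a="z - e" and b="z + e"])
    show "(f has_real_derivative f' (?g z)) (at (?g z))"
      using f'(1)[OF \<open>a < ?g z\<close>] .
    show "f' (?g z) \<noteq> 0"
      using f'(2)[OF \<open>a < ?g z\<close>] by simp
    show "z - e < z" "z < z + e"
      using \<open>0 < e\<close> by auto
    show "f (?g y) = y" if "z - e < y" "y < z + e" for y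
    proof -
      have "y \<in> ball z e"
        using that by (simp add: dist_real_def abs_diff_less_iff)
      with \<open>ball z e \<subseteq> W\<close> show ?thesis
        using f_g by blast
    qed
    show "isCont ?g z"
      using isCont_inv_into_real[OF f' \<open>a < ?g z\<close>] by (simp only: f_g[OF \<open>z \<in> W\<close>])
  qed
qed

text \<open>The inverse g of f satisfies g' = 1 / (f' \<circ> g), and smooth_on_ode applies.\<close>
lemma smooth_on_inv_into_real:
  fixes f f' :: "real \<Rightarrow> real"
  assumes f: "smooth_on {a<..} f"
    and f': "\<And>y. a < y \<Longrightarrow> (f has_real_derivative f' y) (at y)" "\<And>y. a < y \<Longrightarrow> 0 < f' y"
    and W: "open W" "W \<subseteq> f ` {a<..}"
  shows "smooth_on W (inv_into {a<..} f)"
proof -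
  have "smooth_on {a<..} f'"
    using f'(1) by (intro smooth_on_deriv[OF f]) simp
  moreover have "f' ` {a<..} \<subseteq> - {0}"
    by (auto dest!: f'(2))
  ultimately have G: "smooth_on {a<..} (\<lambda>y. inverse (f' y))"
    by (rule smooth_on_compose[OF _ smooth_on_inverse])
  have "inv_into {a<..} f z \<in> {a<..}" if "z \<in> W" for z
    using W(2) that by (intro inv_into_into) blast
  then have "inv_into {a<..} f ` W \<subseteq> {a<..}"
    by blast
  from smooth_on_ode[OF W(1) this G inv_into_has_real_derivative[OF f' W]]
  show ?thesis .
qed

section \<open>The power series of cosh (sqrt y) and sinh (sqrt y) / sqrt y\<close>

lemma summable_inverse_fact_power:
  assumes "\<And>n. n \<le> m n"
  shows "summable (\<lambda>n. inverse (fact (m n)) * y ^ n :: real)"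
proof (rule summable_comparison_test'[OF summable_exp[of "\<bar>y\<bar>"]])
  fix n
  have "inverse (fact (m n)) \<le> (inverse (fact n) :: real)"
    by (rule le_imp_inverse_le) (auto intro: fact_mono assms)
  then show "norm (inverse (fact (m n)) * y ^ n) \<le> inverse (fact n) * \<bar>y\<bar> ^ n"
    by (simp add: abs_mult power_abs mult_right_mono)
qed

text \<open>cosh_sqrt (r^2) = cosh r and r * sinhc_sqrt (r^2) = sinh r. As power series in
  y = r^2 both functions are smooth on the whole real line, negative y included.\<close>
definition cosh_sqrt :: "real \<Rightarrow> real" where
  "cosh_sqrt y = (\<Sum>n. inverse (fact (2 * n)) * y ^ n)"

definition sinhc_sqrt :: "real \<Rightarrow> real" where
  "sinhc_sqrt y = (\<Sum>n. inverse (fact (2 * n + 1)) * y ^ n)"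

lemma summable_cosh_sqrt: "summable (\<lambda>n. inverse (fact (2 * n)) * y ^ n :: real)"
  by (rule summable_inverse_fact_power) simp

lemma summable_sinhc_sqrt: "summable (\<lambda>n. inverse (fact (2 * n + 1)) * y ^ n :: real)"
  by (rule summable_inverse_fact_power) simp

lemma smooth_on_cosh_sqrt: "smooth_on UNIV cosh_sqrt"
  unfolding cosh_sqrt_def[abs_def] using summable_cosh_sqrt by (rule smooth_on_powser)

lemma smooth_on_sinhc_sqrt: "smooth_on UNIV sinhc_sqrt"
  unfolding sinhc_sqrt_def[abs_def] using summable_sinhc_sqrt by (rule smooth_on_powser)

lemma sinhc_sqrt_0 [simp]: "sinhc_sqrt 0 = 1"
  by (simp add: sinhc_sqrt_def)

lemma one_le_sinhc_sqrt: "0 \<le> y \<Longrightarrow> 1 \<le> sinhc_sqrt y"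
  using sum_le_suminf[OF summable_sinhc_sqrt, of "{0}" y] by (simp add: sinhc_sqrt_def)

lemma sinhc_sqrt_has_real_derivative:
  "(sinhc_sqrt has_real_derivative (\<Sum>n. diffs (\<lambda>n. inverse (fact (2 * n + 1))) n * y ^ n)) (at y)"
  unfolding sinhc_sqrt_def[abs_def] using summable_sinhc_sqrt
  by (rule termdiffs_strong_converges_everywhere)

lemma sinhc_sqrt_has_real_derivative_deriv:
  "(sinhc_sqrt has_real_derivative deriv sinhc_sqrt y) (at y)"
  by (subst DERIV_imp_deriv[OF sinhc_sqrt_has_real_derivative]) (rule sinhc_sqrt_has_real_derivative)

lemma deriv_sinhc_sqrt_nonneg:
  assumes "0 \<le> y" shows "0 \<le> deriv sinhc_sqrt y"
  unfolding DERIV_imp_deriv[OF sinhc_sqrt_has_real_derivative]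
  using termdiff_converges_all[OF summable_sinhc_sqrt] assms
  by (intro suminf_nonneg) (auto simp: diffs_def)

lemma cosh_sqrt_power2: "cosh_sqrt (r\<^sup>2) = cosh r"
proof -
  have "(\<lambda>n. if even n then inverse (fact (2 * (n div 2))) * (r\<^sup>2) ^ (n div 2) else 0)
      sums (0 + cosh_sqrt (r\<^sup>2))"
    unfolding cosh_sqrt_def by (rule sums_if[OF sums_zero summable_sums[OF summable_cosh_sqrt]])
  moreover have "(\<lambda>n. if even n then inverse (fact (2 * (n div 2))) * (r\<^sup>2) ^ (n div 2) else 0) =
      (\<lambda>n. if even n then r ^ n /\<^sub>R fact n else 0)"
    by (auto elim!: evenE simp: power_mult[symmetric] divide_inverse mult.commute)
  ultimately show ?thesis
    using cosh_converges[of r] sums_unique2 by fastforce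
qed

lemma sinhc_sqrt_power2: "r * sinhc_sqrt (r\<^sup>2) = sinh r"
proof -
  have "(\<lambda>n. if even n then 0 else r * (inverse (fact (2 * ((n - 1) div 2) + 1)) * (r\<^sup>2) ^ ((n - 1) div 2)))
      sums (r * sinhc_sqrt (r\<^sup>2))"
    unfolding sinhc_sqrt_def
    by (rule sums_if'[OF sums_mult[OF summable_sums[OF summable_sinhc_sqrt]]])
  moreover have "(\<lambda>n. if even n then 0 else r * (inverse (fact (2 * ((n - 1) div 2) + 1)) * (r\<^sup>2) ^ ((n - 1) div 2))) =
      (\<lambda>n. if even n then 0 else r ^ n /\<^sub>R fact n)"
  proof
    fix n :: nat
    show "(if even n then 0 else r * (inverse (fact (2 * ((n - 1) div 2) + 1)) * (r\<^sup>2) ^ ((n - 1) div 2))) =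
      (if even n then 0 else r ^ n /\<^sub>R fact n)"
      by (cases "even n") (auto elim!: oddE simp: power_mult[symmetric] divide_inverse mult_ac)
  qed
  ultimately show ?thesis
    using sinh_converges[of r] sums_unique2 by fastforce
qed

lemma cosh_sqrt_eq: "0 \<le> y \<Longrightarrow> cosh_sqrt y = cosh (sqrt y)"
  using cosh_sqrt_power2[of "sqrt y"] by simp

lemma cosh_sqrt_power2_eq:
  assumes "0 \<le> y"
  shows "(cosh_sqrt y)\<^sup>2 = 1 + y * (sinhc_sqrt y)\<^sup>2"
proof -
  have "sqrt y * sinhc_sqrt y = sinh (sqrt y)"
    using sinhc_sqrt_power2[of "sqrt y"] assms by simp
  then have "y * (sinhc_sqrt y)\<^sup>2 = (sinh (sqrt y))\<^sup>2"
    using assms by (metis power_mult_distrib real_sqrt_pow2)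
  then show ?thesis
    using cosh_square_eq[of "sqrt y"] assms by (simp add: cosh_sqrt_eq)
qed

definition sinh_sq_sqrt :: "real \<Rightarrow> real" where
  "sinh_sq_sqrt y = y * (sinhc_sqrt y)\<^sup>2"

lemma sinh_sq_sqrt_power2: "sinh_sq_sqrt (r\<^sup>2) = (sinh r)\<^sup>2"
  using sinhc_sqrt_power2[of r] by (simp add: sinh_sq_sqrt_def power_mult_distrib[symmetric])

lemma sinh_sq_sqrt_surj: "0 \<le> z \<Longrightarrow> \<exists>w\<ge>0. sinh_sq_sqrt w = z"
  by (rule exI[of _ "(arsinh (sqrt z))\<^sup>2"]) (simp add: sinh_sq_sqrt_power2)

lemma smooth_on_sinh_sq_sqrt: "smooth_on UNIV sinh_sq_sqrt"
  unfolding sinh_sq_sqrt_def[abs_def]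
  using smooth_on_mult[OF smooth_on_id smooth_on_power[OF smooth_on_sinhc_sqrt]] by simp

lemma sinh_sq_sqrt_has_real_derivative:
  "(sinh_sq_sqrt has_real_derivative
     (sinhc_sqrt y)\<^sup>2 + 2 * y * sinhc_sqrt y * deriv sinhc_sqrt y) (at y)"
  unfolding sinh_sq_sqrt_def[abs_def]
  by (auto intro!: derivative_eq_intros sinhc_sqrt_has_real_derivative_deriv)

lemma sinh_sq_sqrt_has_real_derivative_deriv:
  "(sinh_sq_sqrt has_real_derivative deriv sinh_sq_sqrt y) (at y)"
  by (subst DERIV_imp_deriv[OF sinh_sq_sqrt_has_real_derivative])
    (rule sinh_sq_sqrt_has_real_derivative)

lemma sinh_sq_sqrt_image:
  assumes "a \<le> 0"
  shows "{sinh_sq_sqrt a<..} \<subseteq> sinh_sq_sqrt ` {a..}"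
proof
  fix z assume z: "z \<in> {sinh_sq_sqrt a<..}"
  have "1 \<le> (sinhc_sqrt \<bar>z\<bar>)\<^sup>2"
    by (rule one_le_power[OF one_le_sinhc_sqrt]) simp
  then have "\<bar>z\<bar> * 1 \<le> \<bar>z\<bar> * (sinhc_sqrt \<bar>z\<bar>)\<^sup>2"
    by (rule mult_left_mono) simp
  then have "z \<le> sinh_sq_sqrt \<bar>z\<bar>"
    unfolding sinh_sq_sqrt_def using abs_ge_self[of z] by linarith
  moreover have "sinh_sq_sqrt a \<le> z" "a \<le> \<bar>z\<bar>"
    using z assms by auto
  moreover have "continuous_on {a..\<bar>z\<bar>} sinh_sq_sqrt"
    by (rule continuous_on_subset[OF smooth_on_imp_continuous_on[OF smooth_on_sinh_sq_sqrt]]) simp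
  ultimately obtain x where "a \<le> x" "sinh_sq_sqrt x = z"
    using IVT'[of sinh_sq_sqrt a z "\<bar>z\<bar>"] by blast
  then show "z \<in> sinh_sq_sqrt ` {a..}"
    by (intro image_eqI[of z _ x]) auto
qed

lemma sinh_sq_sqrt_deriv_pos_near_nonneg:
  "\<exists>e>0. \<forall>y>-e. 0 < sinhc_sqrt y \<and> 0 < deriv sinh_sq_sqrt y"
proof -
  let ?d = "deriv sinh_sq_sqrt"
  have d: "?d y = (sinhc_sqrt y)\<^sup>2 + 2 * y * sinhc_sqrt y * deriv sinhc_sqrt y" for y
    by (rule DERIV_imp_deriv[OF sinh_sq_sqrt_has_real_derivative])
  have "continuous_on UNIV ?d"
    using sinh_sq_sqrt_has_real_derivative_deriv
    by (intro smooth_on_imp_continuous_on smooth_on_deriv[OF smooth_on_sinh_sq_sqrt])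
  moreover have "continuous_on UNIV sinhc_sqrt"
    by (rule smooth_on_imp_continuous_on[OF smooth_on_sinhc_sqrt])
  ultimately have "open {y. 0 < sinhc_sqrt y \<and> 0 < ?d y}"
    by (intro open_Collect_conj open_Collect_less continuous_on_const)
  moreover have "0 \<in> {y. 0 < sinhc_sqrt y \<and> 0 < ?d y}"
    by (simp add: d)
  ultimately obtain e where "0 < e" and e: "ball 0 e \<subseteq> {y. 0 < sinhc_sqrt y \<and> 0 < ?d y}"
    by (metis open_contains_ball)
  have "0 < sinhc_sqrt y \<and> 0 < ?d y" if "-e < y" for y
  proof (cases "0 \<le> y")
    case True
    then have "1 \<le> sinhc_sqrt y"
      by (rule one_le_sinhc_sqrt)
    moreover have "0 \<le> 2 * y * sinhc_sqrt y * deriv sinhc_sqrt y"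
      using True \<open>1 \<le> sinhc_sqrt y\<close> deriv_sinhc_sqrt_nonneg[OF True] by simp
    ultimately show ?thesis
      unfolding d by (simp add: add_pos_nonneg)
  next
    case False
    with that have "y \<in> ball 0 e"
      by (simp add: dist_real_def)
    with e show ?thesis
      by blast
  qed
  with \<open>0 < e\<close> show ?thesis
    by auto
qed

text \<open>The factor r / sinh r, as a function of sinh r ^ 2, extends smoothly past 0. It is
  1 / sinhc_sqrt composed with the inverse of sinh_sq_sqrt, which has positive derivative
  on a half-line containing 0.\<close>
lemma ex_smooth_sinhc_inversion:
  "\<exists>K W. open W \<and> {0..} \<subseteq> W \<and> smooth_on W K \<and>
     (\<forall>y\<ge>0. K (sinh_sq_sqrt y) = inverse (sinhc_sqrt y))"
proof -
  obtain e where "0 < e" and e: "\<And>y. -e < y \<Longrightarrow> 0 < sinhc_sqrt y \<and> 0 < deriv sinh_sq_sqrt y"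
    using sinh_sq_sqrt_deriv_pos_near_nonneg by blast
  let ?\<Psi> = "inv_into {-e<..} sinh_sq_sqrt"
  define W where "W = {sinh_sq_sqrt (-e/2)<..}"
  have mono: "strict_mono_on {-e<..} sinh_sq_sqrt"
    using sinh_sq_sqrt_has_real_derivative_deriv e by (intro has_real_derivative_pos_imp_strict_mono_on) auto
  then have inj: "inj_on sinh_sq_sqrt {-e<..}"
    by (rule strict_mono_on_imp_inj_on)
  have "{0..} \<subseteq> W"
    using strict_mono_onD[OF mono, of "-e/2" 0] \<open>0 < e\<close> by (auto simp: W_def sinh_sq_sqrt_def)
  have "W \<subseteq> sinh_sq_sqrt ` {-e/2..}"
    unfolding W_def using \<open>0 < e\<close> by (intro sinh_sq_sqrt_image) simp
  also have "\<dots> \<subseteq> sinh_sq_sqrt ` {-e<..}"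
    using \<open>0 < e\<close> by (intro image_mono) auto
  finally have "W \<subseteq> sinh_sq_sqrt ` {-e<..}" .
  have \<Psi>: "smooth_on W ?\<Psi>"
  proof (rule smooth_on_inv_into_real[where f'="deriv sinh_sq_sqrt"])
    show "smooth_on {-e<..} sinh_sq_sqrt"
      by (rule smooth_on_subset[OF smooth_on_sinh_sq_sqrt]) auto
    show "(sinh_sq_sqrt has_real_derivative deriv sinh_sq_sqrt y) (at y)" for y
      by (rule sinh_sq_sqrt_has_real_derivative_deriv)
    show "0 < deriv sinh_sq_sqrt y" if "-e < y" for y
      using e[OF that] by simp
  qed (simp add: W_def, fact)
  have "0 < sinhc_sqrt (?\<Psi> z)" if "z \<in> W" for z
  proof -
    have "z \<in> sinh_sq_sqrt ` {-e<..}"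
      using \<open>W \<subseteq> sinh_sq_sqrt ` {-e<..}\<close> that by (rule subsetD)
    then have "-e < ?\<Psi> z"
      using inv_into_into[of z sinh_sq_sqrt "{-e<..}"] by simp
    then show ?thesis
      using e by blast
  qed
  then have "(\<lambda>z. sinhc_sqrt (?\<Psi> z)) ` W \<subseteq> - {0}"
    by fastforce
  moreover have "smooth_on W (\<lambda>z. sinhc_sqrt (?\<Psi> z))"
    using smooth_on_compose[OF \<Psi> smooth_on_sinhc_sqrt] by simp
  ultimately have "smooth_on W (\<lambda>z. inverse (sinhc_sqrt (?\<Psi> z)))"
    using smooth_on_compose[OF _ smooth_on_inverse] by blast
  moreover have "inverse (sinhc_sqrt (?\<Psi> (sinh_sq_sqrt y))) = inverse (sinhc_sqrt y)" if "0 \<le> y" for y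
    using inv_into_f_f[OF inj] that \<open>0 < e\<close> by simp
  moreover have "open W"
    by (simp add: W_def)
  ultimately show ?thesis
    using \<open>{0..} \<subseteq> W\<close> by blast
qed

section \<open>Quaternions and quaternionic matrices\<close>

lemma power2_norm_quat: "(norm (a, b, c, d) :: real)\<^sup>2 = a\<^sup>2 + b\<^sup>2 + c\<^sup>2 + d\<^sup>2"
  unfolding power2_norm_eq_inner by (simp add: inner_prod_def power2_eq_square)

lemma qmul_assoc: "qmul (qmul p q) r = qmul p (qmul q r)"
  by (cases p rule: prod_cases4; cases q rule: prod_cases4; cases r rule: prod_cases4)
    (simp add: algebra_simps)

lemma qmul_add_left: "qmul (p + q) r = qmul p r + qmul q r"
  by (cases p rule: prod_cases4; cases q rule: prod_cases4; cases r rule: prod_cases4)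
    (simp add: algebra_simps)

lemma qmul_add_right: "qmul r (p + q) = qmul r p + qmul r q"
  by (cases p rule: prod_cases4; cases q rule: prod_cases4; cases r rule: prod_cases4)
    (simp add: algebra_simps)

lemma qmul_scaleR_left [simp]: "qmul (c *\<^sub>R p) q = c *\<^sub>R qmul p q"
  by (cases p rule: prod_cases4; cases q rule: prod_cases4) (simp add: algebra_simps)

lemma qmul_scaleR_right [simp]: "qmul p (c *\<^sub>R q) = c *\<^sub>R qmul p q"
  by (cases p rule: prod_cases4; cases q rule: prod_cases4) (simp add: algebra_simps)

lemma qmul_qone_left [simp]: "qmul qone p = p"
  by (cases p rule: prod_cases4) (simp add: qone_def)

lemma qmul_qone_right [simp]: "qmul p qone = p"
  by (cases p rule: prod_cases4) (simp add: qone_def)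

lemma qmul_zero_left [simp]: "qmul 0 p = 0"
  by (cases p rule: prod_cases4) (simp add: zero_prod_def)

lemma qmul_zero_right [simp]: "qmul p 0 = 0"
  by (cases p rule: prod_cases4) (simp add: zero_prod_def)

lemma qmul_minus_left [simp]: "qmul (- p) q = - qmul p q"
  by (cases p rule: prod_cases4; cases q rule: prod_cases4) (simp add: algebra_simps)

lemma qmul_minus_right [simp]: "qmul p (- q) = - qmul p q"
  by (cases p rule: prod_cases4; cases q rule: prod_cases4) (simp add: algebra_simps)

lemma qcnj_qmul: "qcnj (qmul p q) = qmul (qcnj q) (qcnj p)"
  by (cases p rule: prod_cases4; cases q rule: prod_cases4) (simp add: algebra_simps)

lemma qcnj_qcnj [simp]: "qcnj (qcnj p) = p"
  by (cases p rule: prod_cases4) simp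

lemma qcnj_scaleR [simp]: "qcnj (c *\<^sub>R p) = c *\<^sub>R qcnj p"
  by (cases p rule: prod_cases4) simp

lemma qmul_qcnj_right: "qmul p (qcnj p) = (norm p)\<^sup>2 *\<^sub>R qone"
  by (cases p rule: prod_cases4)
    (simp add: power2_eq_square power2_norm_quat[unfolded power2_eq_square] qone_def)

lemma qmul_qcnj_left: "qmul (qcnj p) p = (norm p)\<^sup>2 *\<^sub>R qone"
  by (cases p rule: prod_cases4)
    (simp add: power2_eq_square power2_norm_quat[unfolded power2_eq_square] qone_def)

lemma qmul_qcnj_left_assoc: "qmul (qcnj p) (qmul p r) = (norm p)\<^sup>2 *\<^sub>R r"
  by (simp add: qmul_assoc[symmetric] qmul_qcnj_left)

lemma norm_qmul: "norm (qmul p q) = norm p * norm q"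
proof -
  have "(norm (qmul p q))\<^sup>2 = (norm p * norm q)\<^sup>2"
    by (cases p rule: prod_cases4; cases q rule: prod_cases4)
      (simp add: power2_eq_square power2_norm_quat[unfolded power2_eq_square] algebra_simps)
  then show ?thesis by (simp add: power2_eq_iff_nonneg)
qed

lemma norm_qcnj [simp]: "norm (qcnj p) = norm p"
  by (cases p rule: prod_cases4) (simp add: norm_Pair)

lemma scaleR_qone_eq_iff [simp]: "r *\<^sub>R qone = s *\<^sub>R qone \<longleftrightarrow> r = s"
  by (simp add: qone_def)

lemma bounded_bilinear_qmul: "bounded_bilinear qmul"
proof
  show "\<exists>K. \<forall>a b. norm (qmul a b) \<le> norm a * norm b * K"
    by (rule exI[of _ 1]) (simp add: norm_qmul)
qed (simp_all add: qmul_add_left qmul_add_right)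

lemma bounded_linear_qcnj: "bounded_linear qcnj"
proof
  show "qcnj (a + b) = qcnj a + qcnj b" for a b
    by (cases a rule: prod_cases4; cases b rule: prod_cases4) simp
  show "\<exists>K. \<forall>a. norm (qcnj a) \<le> norm a * K"
    by (rule exI[of _ 1]) simp
qed simp

lemma hmul_add_left: "hmul (A + A') B = hmul A B + hmul A' B"
  by (cases A rule: prod_cases4; cases A' rule: prod_cases4; cases B rule: prod_cases4)
    (simp add: qmul_add_left)

lemma hmul_add_right: "hmul A (B + B') = hmul A B + hmul A B'"
  by (cases A rule: prod_cases4; cases B' rule: prod_cases4; cases B rule: prod_cases4)
    (simp add: qmul_add_right)

lemma hmul_scaleR_left: "hmul (c *\<^sub>R A) B = c *\<^sub>R hmul A B"
  by (cases A rule: prod_cases4; cases B rule: prod_cases4) (simp add: scaleR_right_distrib)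

lemma hmul_scaleR_right: "hmul A (c *\<^sub>R B) = c *\<^sub>R hmul A B"
  by (cases A rule: prod_cases4; cases B rule: prod_cases4) (simp add: scaleR_right_distrib)

lemma bounded_bilinear_hmul: "bounded_bilinear hmul"
proof -
  have "linear (hmul A)" for A
    by (rule linearI) (simp_all add: hmul_add_right hmul_scaleR_right)
  moreover have "linear (\<lambda>A. hmul A B)" for B
    by (rule linearI) (simp_all add: hmul_add_left hmul_scaleR_left)
  ultimately have "bilinear hmul"
    by (simp add: bilinear_def)
  then show ?thesis
    by (rule bilinear_conv_bounded_bilinear[THEN iffD1])
qed

lemma smooth_on_qmul: "smooth_on U f \<Longrightarrow> smooth_on U g \<Longrightarrow> smooth_on U (\<lambda>x. qmul (f x) (g x))"
  by (rule smooth_on_bilinear[OF bounded_bilinear_qmul])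

lemma smooth_on_hmul: "smooth_on U f \<Longrightarrow> smooth_on U g \<Longrightarrow> smooth_on U (\<lambda>x. hmul (f x) (g x))"
  by (rule smooth_on_bilinear[OF bounded_bilinear_hmul])

lemma smooth_on_qcnj: "smooth_on U f \<Longrightarrow> smooth_on U (\<lambda>x. qcnj (f x))"
  by (rule smooth_on_linear[OF bounded_linear_qcnj])

lemma smooth_on_hdiag:
  assumes "smooth_on U f" "smooth_on U g"
  shows "smooth_on U (\<lambda>x. hdiag (f x) (g x))"
proof -
  have "smooth_on U (\<lambda>x. 0 :: quat)"
    by (rule smooth_on_const[OF smooth_on_open[OF assms(1)]])
  then show ?thesis
    unfolding hdiag_def by (intro smooth_on_Pair assms)
qed

section \<open>The map piB and its inverse\<close>

definition mB_of :: "quat \<Rightarrow> hmat" where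
  "mB_of q = (0, qcnj q, q, 0)"

lemma mB_eq_range_mB_of: "mB = range mB_of"
  unfolding mB_def mB_of_def by blast

lemma mB_of_lower_left [simp]: "fst (snd (snd (mB_of q))) = q"
  by (simp add: mB_of_def)

lemma smooth_on_mB_of:
  assumes "smooth_on U f"
  shows "smooth_on U (\<lambda>x. mB_of (f x))"
proof -
  have "smooth_on U (\<lambda>x. 0 :: quat)"
    by (rule smooth_on_const[OF smooth_on_open[OF assms]])
  then show ?thesis
    unfolding mB_of_def using assms by (intro smooth_on_Pair smooth_on_qcnj)
qed

lemma hpow_mB_of:
  "hpow (mB_of q) n = ((norm q)\<^sup>2) ^ (n div 2) *\<^sub>R (if even n then hid else mB_of q)"
proof (induction n)
  case (Suc n)
  have sq: "hmul (mB_of q) (mB_of q) = (norm q)\<^sup>2 *\<^sub>R hid"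
    by (simp add: mB_of_def hid_def qmul_qcnj_right qmul_qcnj_left)
  have "hmul (mB_of q) hid = mB_of q"
    by (simp add: mB_of_def hid_def)
  with Suc sq show ?case
    by (auto simp: hmul_scaleR_right elim: oddE)
qed simp

lemma hexp_mB_of:
  "hexp (mB_of q) = cosh_sqrt ((norm q)\<^sup>2) *\<^sub>R hid + sinhc_sqrt ((norm q)\<^sup>2) *\<^sub>R mB_of q"
proof -
  define y where "y = (norm q)\<^sup>2"
  define a where "a n = (if even n then inverse (fact (2 * (n div 2))) * y ^ (n div 2) else 0)" for n
  define b where "b n = (if even n then 0
    else inverse (fact (2 * ((n - 1) div 2) + 1)) * y ^ ((n - 1) div 2))" for n
  have "a sums cosh_sqrt y"
    using sums_if[OF sums_zero summable_sums[OF summable_cosh_sqrt]]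
    unfolding a_def cosh_sqrt_def by simp
  moreover have "b sums sinhc_sqrt y"
    using sums_if'[OF summable_sums[OF summable_sinhc_sqrt]]
    unfolding b_def sinhc_sqrt_def by simp
  ultimately have "(\<lambda>n. a n *\<^sub>R hid + b n *\<^sub>R mB_of q) sums (cosh_sqrt y *\<^sub>R hid + sinhc_sqrt y *\<^sub>R mB_of q)"
    by (intro sums_add sums_scaleR_left)
  moreover have "(1 / fact n) *\<^sub>R hpow (mB_of q) n = a n *\<^sub>R hid + b n *\<^sub>R mB_of q" for n
    by (cases "even n") (auto elim!: evenE oddE simp: hpow_mB_of a_def b_def y_def divide_inverse)
  ultimately show ?thesis
    unfolding hexp_def y_def by (simp add: sums_iff)
qed

lemma piB_mB_of:
  "piB (u, mB_of q, v) =
    (cosh_sqrt ((norm q)\<^sup>2) *\<^sub>R qmul u v, sinhc_sqrt ((norm q)\<^sup>2) *\<^sub>R qmul (qmul u (qcnj q)) v,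
     sinhc_sqrt ((norm q)\<^sup>2) *\<^sub>R qmul q v, cosh_sqrt ((norm q)\<^sup>2) *\<^sub>R v)"
  by (simp add: piB_def hexp_mB_of) (simp add: mB_of_def hid_def hdiag_def)

lemma Sp11_iff:
  "(a, b, c, d) \<in> Sp11 \<longleftrightarrow>
    (norm a)\<^sup>2 = 1 + (norm c)\<^sup>2 \<and> (norm d)\<^sup>2 = 1 + (norm b)\<^sup>2 \<and> qmul (qcnj a) b = qmul (qcnj c) d"
proof -
  have M: "hmul (hadj (a, b, c, d)) (hmul I11 (a, b, c, d)) =
    (((norm a)\<^sup>2 - (norm c)\<^sup>2) *\<^sub>R qone, qmul (qcnj a) b - qmul (qcnj c) d,
     qmul (qcnj b) a - qmul (qcnj d) c, ((norm b)\<^sup>2 - (norm d)\<^sup>2) *\<^sub>R qone)"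
    by (simp add: I11_def qmul_qcnj_left scaleR_diff_left)
  have I: "I11 = (1 *\<^sub>R qone, 0, 0, (-1) *\<^sub>R qone)"
    by (simp add: I11_def)
  have "qmul (qcnj b) a = qmul (qcnj d) c \<longleftrightarrow> qmul (qcnj a) b = qmul (qcnj c) d"
    by (metis qcnj_qmul qcnj_qcnj)
  then show ?thesis
    unfolding Sp11_def mem_Collect_eq M
    unfolding I prod.inject scaleR_qone_eq_iff right_minus_eq
    by auto
qed

lemma Sp11_norms:
  assumes "(a, b, c, d) \<in> Sp11"
  shows "norm a = norm d" "(norm d)\<^sup>2 = 1 + (norm c)\<^sup>2"
    "(norm d)\<^sup>2 *\<^sub>R b = qmul a (qmul (qcnj c) d)"
proof -
  have a: "(norm a)\<^sup>2 = 1 + (norm c)\<^sup>2" and d: "(norm d)\<^sup>2 = 1 + (norm b)\<^sup>2"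
    and ab: "qmul (qcnj a) b = qmul (qcnj c) d"
    using assms by (auto simp: Sp11_iff)
  have "norm a * norm b = norm c * norm d"
    using arg_cong[OF ab, of norm] by (simp add: norm_qmul)
  then have "(norm a)\<^sup>2 * (norm b)\<^sup>2 = (norm c)\<^sup>2 * (norm d)\<^sup>2"
    by (metis power_mult_distrib)
  then have bc: "(norm b)\<^sup>2 = (norm c)\<^sup>2"
    unfolding a d by (simp add: algebra_simps)
  then show "(norm d)\<^sup>2 = 1 + (norm c)\<^sup>2"
    using d by simp
  then have "(norm a)\<^sup>2 = (norm d)\<^sup>2"
    using a by simp
  then show "norm a = norm d"
    using power2_eq_iff_nonneg[of "norm a" "norm d"] by simp
  have "qmul a (qmul (qcnj a) b) = qmul a (qmul (qcnj c) d)"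
    by (simp add: ab)
  then show "(norm d)\<^sup>2 *\<^sub>R b = qmul a (qmul (qcnj c) d)"
    using \<open>norm a = norm d\<close> by (simp add: qmul_assoc[symmetric] qmul_qcnj_right)
qed

lemma piB_mB_of_mem_Sp11:
  assumes "norm u = 1" "norm v = 1"
  shows "piB (u, mB_of q, v) \<in> Sp11"
  using cosh_sqrt_power2_eq[of "(norm q)\<^sup>2"] assms
  by (simp add: piB_mB_of Sp11_iff norm_qmul power_mult_distrib qcnj_qmul qmul_assoc
      qmul_qcnj_left_assoc algebra_simps)

text \<open>The inverse of piB, given a function K with K (sinh r ^ 2) = r / sinh r for r \<ge> 0:
  from piB (u, mB_of q, v) = (a, b, c, d) one reads off norm d = cosh (norm q), v = d / norm d,
  u = a * cnj d / norm d ^ 2, and q = K (norm c ^ 2) * c * cnj d / norm d.\<close>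
definition piB_inv :: "(real \<Rightarrow> real) \<Rightarrow> hmat \<Rightarrow> quat \<times> hmat \<times> quat" where
  "piB_inv K = (\<lambda>(a, b, c, d).
     (inverse ((norm d)\<^sup>2) *\<^sub>R qmul a (qcnj d),
      mB_of ((K ((norm c)\<^sup>2) / norm d) *\<^sub>R qmul c (qcnj d)),
      inverse (norm d) *\<^sub>R d))"

lemma piB_inv_piB:
  assumes K: "\<And>y. 0 \<le> y \<Longrightarrow> K (sinh_sq_sqrt y) = inverse (sinhc_sqrt y)"
    and u: "norm u = 1" and v: "norm v = 1"
  shows "piB_inv K (piB (u, mB_of q, v)) = (u, mB_of q, v)"
proof -
  define C where "C = cosh_sqrt ((norm q)\<^sup>2)"
  define S where "S = sinhc_sqrt ((norm q)\<^sup>2)"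
  have "1 \<le> C"
    unfolding C_def by (simp add: cosh_sqrt_eq cosh_real_ge_1)
  have "1 \<le> S"
    unfolding S_def by (simp add: one_le_sinhc_sqrt)
  have vv: "qmul v (qcnj v) = qone"
    using v by (simp add: qmul_qcnj_right)
  have nd: "norm (C *\<^sub>R v) = C"
    using \<open>1 \<le> C\<close> v by simp
  have "(norm (S *\<^sub>R qmul q v))\<^sup>2 = sinh_sq_sqrt ((norm q)\<^sup>2)"
    using v by (simp add: S_def sinh_sq_sqrt_def norm_qmul power_mult_distrib)
  then have k: "K ((norm (S *\<^sub>R qmul q v))\<^sup>2) = inverse S"
    unfolding S_def by (simp add: K)
  have "0 < C" "0 < S"
    using \<open>1 \<le> C\<close> \<open>1 \<le> S\<close> by auto
  have c1: "inverse ((norm (C *\<^sub>R v))\<^sup>2) *\<^sub>R qmul (C *\<^sub>R qmul u v) (qcnj (C *\<^sub>R v)) = u"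
    using \<open>0 < C\<close> v by (simp add: qmul_assoc vv power2_eq_square field_simps)
  have c2: "(K ((norm (S *\<^sub>R qmul q v))\<^sup>2) / norm (C *\<^sub>R v)) *\<^sub>R
      qmul (S *\<^sub>R qmul q v) (qcnj (C *\<^sub>R v)) = q"
    using \<open>0 < C\<close> \<open>0 < S\<close> v by (simp only: k) (simp add: qmul_assoc vv field_simps)
  have c3: "inverse (norm (C *\<^sub>R v)) *\<^sub>R C *\<^sub>R v = v"
    using \<open>0 < C\<close> v by simp
  show ?thesis
    unfolding piB_mB_of C_def[symmetric] S_def[symmetric] piB_inv_def prod.case c1 c2 c3 ..
qed

lemma Sp11_one_le_norm:
  assumes "(a, b, c, d) \<in> Sp11"
  shows "1 \<le> norm d"
proof -
  have "1\<^sup>2 \<le> (norm d)\<^sup>2"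
    using Sp11_norms(2)[OF assms] by simp
  then show ?thesis
    by (rule power2_le_imp_le) simp
qed

lemma Sp11_cosh_sqrt:
  assumes "(a, b, c, d) \<in> Sp11" "0 \<le> w" "sinh_sq_sqrt w = (norm c)\<^sup>2"
  shows "cosh_sqrt w = norm d"
proof -
  have "(cosh_sqrt w)\<^sup>2 = (norm d)\<^sup>2"
    using cosh_sqrt_power2_eq[OF assms(2)] assms(3) Sp11_norms(2)[OF assms(1)]
    by (simp add: sinh_sq_sqrt_def)
  then show ?thesis
    using cosh_sqrt_eq[OF assms(2)] cosh_real_ge_1[of "sqrt w"] by (simp add: power2_eq_iff_nonneg)
qed

lemma piB_inv_mem:
  assumes "(a, b, c, d) \<in> Sp11"
  shows "piB_inv K (a, b, c, d) \<in> Sp1 \<times> mB \<times> Sp1"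
proof -
  have "d \<noteq> 0"
    using Sp11_one_le_norm[OF assms] by auto
  then show ?thesis
    using Sp11_norms(1)[OF assms]
    by (simp add: piB_inv_def Sp1_def mB_eq_range_mB_of norm_qmul power2_eq_square field_simps)
qed

lemma piB_piB_inv:
  assumes K: "\<And>y. 0 \<le> y \<Longrightarrow> K (sinh_sq_sqrt y) = inverse (sinhc_sqrt y)"
    and A: "(a, b, c, d) \<in> Sp11"
  shows "piB (piB_inv K (a, b, c, d)) = (a, b, c, d)"
proof -
  define n where "n = norm d"
  obtain w where w: "0 \<le> w" "sinh_sq_sqrt w = (norm c)\<^sup>2"
    using sinh_sq_sqrt_surj[of "(norm c)\<^sup>2"] by auto
  define k where "k = inverse (sinhc_sqrt w)"
  define u where "u = inverse (n\<^sup>2) *\<^sub>R qmul a (qcnj d)"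
  define q where "q = (k / n) *\<^sub>R qmul c (qcnj d)"
  define v where "v = inverse n *\<^sub>R d"
  have G: "piB_inv K (a, b, c, d) = (u, mB_of q, v)"
    using K[OF w(1)] by (simp add: piB_inv_def u_def q_def v_def k_def n_def w(2))
  have "n \<noteq> 0"
    using Sp11_one_le_norm[OF A] by (auto simp: n_def)
  have Sk: "sinhc_sqrt w * k = 1"
    using one_le_sinhc_sqrt[OF w(1)] by (simp add: k_def)
  have dd: "qmul (qcnj d) d = n\<^sup>2 *\<^sub>R qone"
    by (simp add: n_def qmul_qcnj_left)
  have "(norm q)\<^sup>2 = (k * k) * (w * (sinhc_sqrt w)\<^sup>2)"
    using w(2) Sp11_norms(2)[OF A] \<open>n \<noteq> 0\<close>
    by (simp add: q_def norm_qmul power_mult_distrib sinh_sq_sqrt_def n_def power_divide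
        power2_eq_square)
  also have "\<dots> = w"
    using Sk by (simp add: power2_eq_square algebra_simps)
  finally have nq: "(norm q)\<^sup>2 = w" .
  have c1: "n *\<^sub>R qmul u v = a"
    using \<open>n \<noteq> 0\<close> by (simp add: u_def v_def qmul_assoc dd power2_eq_square field_simps)
  have "sinhc_sqrt w *\<^sub>R qmul (qmul u (qcnj q)) v
      = (sinhc_sqrt w * k * inverse (n\<^sup>2)) *\<^sub>R qmul a (qmul (qcnj c) d)"
    using \<open>n \<noteq> 0\<close>
    by (simp add: u_def q_def v_def qcnj_qmul qmul_assoc qmul_qcnj_left_assoc n_def[symmetric]
        divide_inverse power2_eq_square mult_ac)
  also have "\<dots> = b"
    using \<open>n \<noteq> 0\<close> by (simp flip: Sp11_norms(3)[OF A, folded n_def] add: Sk)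
  finally have c2: "sinhc_sqrt w *\<^sub>R qmul (qmul u (qcnj q)) v = b" .
  have c3: "sinhc_sqrt w *\<^sub>R qmul q v = c"
    using Sk \<open>n \<noteq> 0\<close> by (simp add: q_def v_def qmul_assoc dd power2_eq_square divide_inverse mult_ac)
  have c4: "n *\<^sub>R v = d"
    using \<open>n \<noteq> 0\<close> by (simp add: v_def)
  show ?thesis
    using Sp11_cosh_sqrt[OF A w]
    by (simp add: G piB_mB_of nq c1 c2 c3 c4 n_def[symmetric])
qed

lemma smooth_map_on_piB: "smooth_map_on (Sp1 \<times> mB \<times> Sp1) piB"
proof -
  let ?c = "\<lambda>X::hmat. (norm (fst (snd (snd X))))\<^sup>2"
  define E where "E X = cosh_sqrt (?c X) *\<^sub>R hid + sinhc_sqrt (?c X) *\<^sub>R X" for X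
  have hexp_E: "hexp X = E X" if "X \<in> mB" for X
    using that by (auto simp: mB_eq_range_mB_of hexp_mB_of E_def)
  have c: "smooth_on UNIV ?c"
    by (intro smooth_on_power2_norm smooth_on_fst smooth_on_snd smooth_on_id open_UNIV)
  have "smooth_on UNIV (\<lambda>X. cosh_sqrt (?c X))" "smooth_on UNIV (\<lambda>X. sinhc_sqrt (?c X))"
    using smooth_on_compose[OF c smooth_on_cosh_sqrt] smooth_on_compose[OF c smooth_on_sinhc_sqrt]
    by simp_all
  then have E: "smooth_on UNIV E"
    unfolding E_def[abs_def]
    by (intro smooth_on_add smooth_on_scaleR smooth_on_const smooth_on_id open_UNIV)
  have id: "smooth_on UNIV (\<lambda>p::quat \<times> hmat \<times> quat. p)"
    by (rule smooth_on_id[OF open_UNIV])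
  have u: "smooth_on UNIV (\<lambda>p::quat \<times> hmat \<times> quat. fst p)"
    and X: "smooth_on UNIV (\<lambda>p::quat \<times> hmat \<times> quat. fst (snd p))"
    and v: "smooth_on UNIV (\<lambda>p::quat \<times> hmat \<times> quat. snd (snd p))"
    using smooth_on_fst[OF id] smooth_on_fst[OF smooth_on_snd[OF id]]
      smooth_on_snd[OF smooth_on_snd[OF id]] by simp_all
  have "smooth_on UNIV (\<lambda>p::quat \<times> hmat \<times> quat. E (fst (snd p)))"
    using smooth_on_compose[OF X E] by simp
  moreover have "smooth_on UNIV (\<lambda>p::quat \<times> hmat \<times> quat. hdiag (fst p) qone)"
    using u smooth_on_const[OF open_UNIV] by (rule smooth_on_hdiag)
  moreover have "smooth_on UNIV (\<lambda>p::quat \<times> hmat \<times> quat. hdiag (snd (snd p)) (snd (snd p)))"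
    using v v by (rule smooth_on_hdiag)
  ultimately have "smooth_on UNIV (\<lambda>p::quat \<times> hmat \<times> quat.
      hmul (hmul (hdiag (fst p) qone) (E (fst (snd p)))) (hdiag (snd (snd p)) (snd (snd p))))"
    by (intro smooth_on_hmul)
  then show ?thesis
    by (rule smooth_on_imp_smooth_map_on) (auto simp: piB_def hexp_E)
qed

lemma smooth_map_on_piB_inv:
  assumes W: "open W" "{0..} \<subseteq> W" and K: "smooth_on W K"
  shows "smooth_map_on Sp11 (piB_inv K)"
proof -
  let ?c = "\<lambda>A::hmat. fst (snd (snd A))" and ?d = "\<lambda>A::hmat. snd (snd (snd A))"
  define U where "U = ?d -` (- {0}) \<inter> (\<lambda>A. (norm (?c A))\<^sup>2) -` W"
  have "open U"
    unfolding U_def using W(1)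
    by (intro open_Int continuous_open_vimage open_Compl closed_singleton) (auto intro!: continuous_intros)
  have Sp11_U: "Sp11 \<subseteq> U"
  proof
    fix A assume "A \<in> Sp11"
    then obtain a b c d where A: "A = (a, b, c, d)" "(a, b, c, d) \<in> Sp11"
      by (cases A rule: prod_cases4) auto
    have "d \<noteq> 0"
      using Sp11_one_le_norm[OF A(2)] by auto
    with W(2) show "A \<in> U"
      by (auto simp: U_def A)
  qed
  have id: "smooth_on U (\<lambda>A. A)"
    by (rule smooth_on_id[OF \<open>open U\<close>])
  have a: "smooth_on U fst"
    using smooth_on_fst[OF id] by simp
  have c: "smooth_on U ?c" and d: "smooth_on U ?d"
    using smooth_on_fst[OF smooth_on_snd[OF smooth_on_snd[OF id]]]
      smooth_on_snd[OF smooth_on_snd[OF smooth_on_snd[OF id]]] by simp_all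
  have inv_d: "smooth_on U (\<lambda>A. inverse (norm (?d A)))"
    using d by (rule smooth_on_inverse_norm) (simp add: U_def)
  have "smooth_on U (\<lambda>A. K ((norm (?c A))\<^sup>2))"
    using smooth_on_compose[OF smooth_on_power2_norm[OF c] K] by (auto simp: U_def)
  then have "smooth_on U (\<lambda>A. mB_of ((K ((norm (?c A))\<^sup>2) * inverse (norm (?d A))) *\<^sub>R
      qmul (?c A) (qcnj (?d A))))"
    using inv_d c d by (intro smooth_on_mB_of smooth_on_scaleR smooth_on_mult smooth_on_qmul smooth_on_qcnj)
  moreover have "smooth_on U (\<lambda>A. (inverse (norm (?d A)))\<^sup>2 *\<^sub>R qmul (fst A) (qcnj (?d A)))"
    using inv_d a d by (intro smooth_on_scaleR smooth_on_power smooth_on_qmul smooth_on_qcnj)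
  moreover have "smooth_on U (\<lambda>A. inverse (norm (?d A)) *\<^sub>R ?d A)"
    using inv_d d by (rule smooth_on_scaleR)
  ultimately have "smooth_on U (\<lambda>A. ((inverse (norm (?d A)))\<^sup>2 *\<^sub>R qmul (fst A) (qcnj (?d A)),
      mB_of ((K ((norm (?c A))\<^sup>2) * inverse (norm (?d A))) *\<^sub>R qmul (?c A) (qcnj (?d A))),
      inverse (norm (?d A)) *\<^sub>R ?d A))"
    by (intro smooth_on_Pair)
  then show ?thesis
    by (rule smooth_on_imp_smooth_map_on[OF _ Sp11_U])
      (auto simp: piB_inv_def split_beta power_inverse divide_inverse)
qed

theorem theorem3p14:
  shows "diffeomorphism_betw piB (Sp1 \<times> mB \<times> Sp1) Sp11"
proof -
  obtain K W where W: "open W" "{0..} \<subseteq> W" and K: "smooth_on W K"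
    and K_eq: "\<And>y. 0 \<le> y \<Longrightarrow> K (sinh_sq_sqrt y) = inverse (sinhc_sqrt y)"
    using ex_smooth_sinhc_inversion by blast
  show ?thesis
  proof (rule diffeomorphism_betwI[where g="piB_inv K"])
    show "piB ` (Sp1 \<times> mB \<times> Sp1) \<subseteq> Sp11"
      by (auto simp: Sp1_def mB_eq_range_mB_of intro: piB_mB_of_mem_Sp11)
    show "piB_inv K (piB p) = p" if "p \<in> Sp1 \<times> mB \<times> Sp1" for p
      using that by (auto simp: Sp1_def mB_eq_range_mB_of piB_inv_piB[OF K_eq])
    show "piB_inv K ` Sp11 \<subseteq> Sp1 \<times> mB \<times> Sp1"
      using piB_inv_mem by (auto simp: image_subset_iff)
    show "piB (piB_inv K A) = A" if "A \<in> Sp11" for A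
      using piB_piB_inv[OF K_eq] that by (cases A rule: prod_cases4) auto
    show "smooth_map_on (Sp1 \<times> mB \<times> Sp1) piB"
      by (rule smooth_map_on_piB)
    show "smooth_map_on Sp11 (piB_inv K)"
      using W K by (rule smooth_map_on_piB_inv)
  qed
qed

end
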